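(* Let $\ell$ be an odd integer with $\ell\equiv 3$ or $5 \pmod 8$, and let $t$ be a positive even integer. Let $G$ be the graph obtained from a cycle $C_\ell$ of length $\ell$ by attaching a path of length $t$ (i.e. with $t$ edges and $t$ new vertices) at one vertex of the cycle, so that one end of the path is identified with a cycle vertex. Then $G$ has $\ell+t$ vertices and $\mathrm{GP}(G)$ is not an integer.
   Context: All graphs are simple and finite. For a connected graph $G$, $d_G(u,v)$ denotes the shortest-path distance and $\mathrm{Aut}(G)$ the automorphism group. The Graovac-Pisanski index is $$\mathrm{GP}(G)=\frac{|V(G)|}{2|\mathrm{Aut}(G)|}\sum_{u\in V(G)}\sum_{\alpha\in \mathrm{Aut}(G)} d_G(u,\alpha(u)).$$ *)

theory Defs
  imports Complex_Main
begin

text \<open>A (simple, undirected) graph is given by a finite vertex set V and a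
symmetric, irreflexive adjacency predicate E (only its restriction to V matters).\<close>

definition adj_rel :: "'a set \<Rightarrow> ('a \<Rightarrow> 'a \<Rightarrow> bool) \<Rightarrow> ('a \<times> 'a) set" where
  "adj_rel V E = {(x, y). x \<in> V \<and> y \<in> V \<and> E x y}"

definition gdist :: "'a set \<Rightarrow> ('a \<Rightarrow> 'a \<Rightarrow> bool) \<Rightarrow> 'a \<Rightarrow> 'a \<Rightarrow> nat" where
  "gdist V E u v = (LEAST n. (u, v) \<in> adj_rel V E ^^ n)"

definition graph_aut :: "'a set \<Rightarrow> ('a \<Rightarrow> 'a \<Rightarrow> bool) \<Rightarrow> ('a \<Rightarrow> 'a) set" where
  "graph_aut V E = {f. bij_betw f V V \<and> (\<forall>u\<in>V. \<forall>v\<in>V. E u v \<longleftrightarrow> E (f u) (f v))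
                      \<and> (\<forall>x. x \<notin> V \<longrightarrow> f x = x)}"

definition GP :: "'a set \<Rightarrow> ('a \<Rightarrow> 'a \<Rightarrow> bool) \<Rightarrow> real" where
  "GP V E = real (card V) / (2 * real (card (graph_aut V E))) *
     (\<Sum>u\<in>V. \<Sum>\<alpha>\<in>graph_aut V E. real (gdist V E u (\<alpha> u)))"

text \<open>The graph obtained from the cycle C_l on vertices 0,...,l-1 by attaching a path
of length t at vertex 0: new vertices l,...,l+t-1, edges 0--l and (l+i)--(l+i+1).\<close>
definition cp_vertices :: "nat \<Rightarrow> nat \<Rightarrow> nat set" where
  "cp_vertices l t = {0..<l + t}"

definition cp_arc :: "nat \<Rightarrow> nat \<Rightarrow> nat \<Rightarrow> nat \<Rightarrow> bool" where
  "cp_arc l t x y \<longleftrightarrow>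
     (x < l \<and> y = (x + 1) mod l)
   \<or> (0 < t \<and> x = 0 \<and> y = l)
   \<or> (l \<le> x \<and> y = x + 1 \<and> y < l + t)"

definition cp_edge :: "nat \<Rightarrow> nat \<Rightarrow> nat \<Rightarrow> nat \<Rightarrow> bool" where
  "cp_edge l t x y \<longleftrightarrow> x \<noteq> y \<and> (cp_arc l t x y \<or> cp_arc l t y x)"

end

theory Submission
  imports Defs
begin

(* The automorphism group of the graph is {id, \<sigma>}, where \<sigma> reflects the cycle through the
   attachment vertex 0 and fixes the pendant path: the end of the path is the only leaf, so every
   automorphism fixes the path pointwise, and it then either fixes or reverses the cycle.  Hence
   GP = (l + t)/4 times the sum of d(u, \<sigma> u).  A cycle vertex u and \<sigma> u = l - u are 2u (mod l)
   apart along the cycle, and for odd l = 2m + 1 doubling permutes the residues mod l, so the sum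
   equals the sum of min(r, l - r) over r < l, which is m(m + 1).  If l \<equiv> 3, 5 (mod 8) then
   m \<equiv> 1, 2 (mod 4), so m(m + 1) \<equiv> 2 (mod 4); as l + t is odd, GP = (l + t) m (m + 1)/4 is not
   an integer. *)

section \<open>Distances and automorphisms of graphs\<close>

lemma gdist_refl [simp]: "gdist V E u u = 0"
  unfolding gdist_def by simp

lemma gdist_le_relpow: "(u, v) \<in> adj_rel V E ^^ k \<Longrightarrow> gdist V E u v \<le> k"
  unfolding gdist_def by (rule Least_le)

lemma relpow_lipschitz_bound:
  fixes h :: "'a \<Rightarrow> int"
  assumes "\<And>x y. (x, y) \<in> R \<Longrightarrow> h x \<le> h y + 1"
  shows "(u, v) \<in> R ^^ n \<Longrightarrow> h u \<le> h v + int n"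
proof (induction n arbitrary: v)
  case 0
  then show ?case by simp
next
  case (Suc n)
  then obtain w where "(u, w) \<in> R ^^ n" "(w, v) \<in> R" by (meson relpow_Suc_E)
  then have "h u \<le> h w + int n" "h w \<le> h v + 1" using Suc.IH assms by blast+
  then show ?case by simp
qed

lemma gdist_lipschitz_bound:
  fixes h :: "'a \<Rightarrow> int"
  assumes "(u, v) \<in> adj_rel V E ^^ k"
    and "\<And>x y. x \<in> V \<Longrightarrow> y \<in> V \<Longrightarrow> E x y \<Longrightarrow> h x \<le> h y + 1"
  shows "h u \<le> h v + int (gdist V E u v)"
proof -
  have walk: "(u, v) \<in> adj_rel V E ^^ gdist V E u v"
    unfolding gdist_def by (rule LeastI[of _ k]) (rule assms(1))
  have lip: "\<And>x y. (x, y) \<in> adj_rel V E \<Longrightarrow> h x \<le> h y + 1"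
    using assms(2) by (simp add: adj_rel_def)
  show ?thesis using relpow_lipschitz_bound[OF lip walk] .
qed

lemma graph_autD:
  assumes "f \<in> graph_aut V E"
  shows "bij_betw f V V" "inj_on f V" "f ` V = V"
    "\<And>u v. u \<in> V \<Longrightarrow> v \<in> V \<Longrightarrow> E (f u) (f v) \<longleftrightarrow> E u v"
    "\<And>x. x \<notin> V \<Longrightarrow> f x = x"
  using assms unfolding graph_aut_def bij_betw_def by auto

lemma graph_aut_comp:
  assumes f: "f \<in> graph_aut V E" and g: "g \<in> graph_aut V E"
  shows "f \<circ> g \<in> graph_aut V E"
  unfolding graph_aut_def
proof (intro CollectI conjI ballI allI impI)
  show "bij_betw (f \<circ> g) V V"
    using bij_betw_trans[OF graph_autD(1)[OF g] graph_autD(1)[OF f]] .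
  show "E u v \<longleftrightarrow> E ((f \<circ> g) u) ((f \<circ> g) v)" if "u \<in> V" "v \<in> V" for u v
  proof -
    have "g u \<in> V" "g v \<in> V" using that graph_autD(3)[OF g] by blast+
    then show ?thesis using that graph_autD(4)[OF f] graph_autD(4)[OF g] by simp
  qed
  show "(f \<circ> g) x = x" if "x \<notin> V" for x
    using that graph_autD(5)[OF f] graph_autD(5)[OF g] by simp
qed

lemma graph_aut_fixes_unique_leaf:
  assumes f: "f \<in> graph_aut V E" and "v \<in> V"
    and leaf: "\<And>w w'. w \<in> V \<Longrightarrow> w' \<in> V \<Longrightarrow> E v w \<Longrightarrow> E v w' \<Longrightarrow> w = w'"
    and branch: "\<And>u. u \<in> V \<Longrightarrow> u \<noteq> v \<Longrightarrow> \<exists>w w'. w \<in> V \<and> w' \<in> V \<and> w \<noteq> w' \<and> E u w \<and> E u w'"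
  shows "f v = v"
proof (rule ccontr)
  assume "f v \<noteq> v"
  moreover have "f v \<in> V" using graph_autD(3)[OF f] \<open>v \<in> V\<close> by blast
  ultimately obtain w w' where w: "w \<in> V" "w' \<in> V" "w \<noteq> w'" "E (f v) w" "E (f v) w'"
    using branch by blast
  obtain x x' where x: "x \<in> V" "x' \<in> V" "w = f x" "w' = f x'"
    using w(1,2) graph_autD(3)[OF f] by (metis imageE)
  have "E v x" "E v x'"
    using w(4,5) x graph_autD(4)[OF f \<open>v \<in> V\<close> x(1)] graph_autD(4)[OF f \<open>v \<in> V\<close> x(2)] by simp_all
  then have "x = x'" using leaf x(1,2) by blast
  then show False using w(3) x(3,4) by simp
qed

lemma graph_aut_fixes_other_neighbour:
  assumes f: "f \<in> graph_aut V E" and "f a = a" "f b = b" "b \<in> V" "c \<in> V" "E b c" "c \<noteq> a"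
    and nbrs: "\<And>w. w \<in> V \<Longrightarrow> E b w \<Longrightarrow> w = a \<or> w = c"
  shows "f c = c"
proof -
  have fc: "f c \<in> V" using graph_autD(3)[OF f] \<open>c \<in> V\<close> by blast
  moreover have "E b (f c)"
    using graph_autD(4)[OF f \<open>b \<in> V\<close> \<open>c \<in> V\<close>] \<open>f b = b\<close> \<open>E b c\<close> by simp
  ultimately have "f c = a \<or> f c = c" using nbrs by blast
  moreover have "f c \<noteq> a"
  proof
    assume "f c = a"
    with fc \<open>f a = a\<close> have "f c = f a" "a \<in> V" by simp_all
    then show False using inj_onD[OF graph_autD(2)[OF f]] \<open>c \<in> V\<close> \<open>c \<noteq> a\<close> by blast
  qed
  ultimately show ?thesis by blast
qed

lemma graph_aut_fixes_path:
  assumes f: "f \<in> graph_aut V E"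
    and p: "\<And>i. i \<le> n \<Longrightarrow> p i \<in> V"
      "\<And>i. Suc i < n \<Longrightarrow> E (p (Suc i)) (p (Suc (Suc i)))"
      "\<And>i. Suc i < n \<Longrightarrow> p (Suc (Suc i)) \<noteq> p i"
      "\<And>i w. Suc i < n \<Longrightarrow> w \<in> V \<Longrightarrow> E (p (Suc i)) w \<Longrightarrow> w = p i \<or> w = p (Suc (Suc i))"
    and start: "f (p 0) = p 0" "f (p 1) = p 1"
  shows "i \<le> n \<Longrightarrow> f (p i) = p i"
proof (induction i rule: less_induct)
  case (less i)
  consider "i \<le> 1" | j where "i = Suc (Suc j)"
    by (cases i; cases "i - 1") auto
  then show ?case
  proof cases
    case 1
    then show ?thesis using start by (cases i) auto
  next
    case 2
    show ?thesis
      by (rule graph_aut_fixes_other_neighbour[OF f, of "p j" "p (Suc j)"])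
        (use less.IH less.prems 2 p in \<open>simp_all add: Suc_le_lessD\<close>)
  qed
qed

lemma GP_eq_if_graph_aut_involution:
  assumes "graph_aut V E = {id, \<sigma>}" and "\<sigma> \<noteq> id"
  shows "GP V E = real (card V) / 4 * (\<Sum>u\<in>V. real (gdist V E u (\<sigma> u)))"
proof -
  have "card (graph_aut V E) = 2" using assms by simp
  moreover have "(\<Sum>\<alpha>\<in>graph_aut V E. real (gdist V E u (\<alpha> u))) = real (gdist V E u (\<sigma> u))" for u
    using assms by simp
  ultimately show ?thesis by (simp add: GP_def)
qed

section \<open>Arithmetic\<close>

lemma bij_betw_double_mod:
  fixes l :: nat
  assumes "odd l"
  shows "bij_betw (\<lambda>u. 2 * u mod l) {..<l} {..<l}"
proof (rule bij_betw_byWitness[where f' = "\<lambda>r. if even r then r div 2 else (r + l) div 2"])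
  have double_mod: "2 * u mod l = (if 2 * u < l then 2 * u else 2 * u - l)" if "u < l" for u
    using that by (simp add: le_mod_geq)
  show "\<forall>u\<in>{..<l}. (if even (2 * u mod l) then 2 * u mod l div 2 else (2 * u mod l + l) div 2) = u"
    using assms by (auto simp: double_mod)
  show "\<forall>r\<in>{..<l}. 2 * (if even r then r div 2 else (r + l) div 2) mod l = r"
    using assms by (auto elim!: evenE oddE)
  show "(\<lambda>u. 2 * u mod l) ` {..<l} \<subseteq> {..<l}"
    using assms by (auto intro: odd_pos)
  show "(\<lambda>r. if even r then r div 2 else (r + l) div 2) ` {..<l} \<subseteq> {..<l}"
    by auto
qed

lemma sum_min_complement_odd:
  fixes m :: nat
  shows "(\<Sum>r<2 * m + 1. min r (2 * m + 1 - r)) = m * (m + 1)"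
proof -
  have split: "{..<2 * m + 1} = {..m} \<union> {m<..2 * m}" by auto
  have "(\<Sum>r\<in>{m<..2 * m}. min r (2 * m + 1 - r)) = (\<Sum>r\<in>{m<..2 * m}. 2 * m + 1 - r)"
    by (rule sum.cong) auto
  also have "\<dots> = (\<Sum>j\<in>{1..m}. j)"
    by (rule sum.reindex_bij_witness[where i = "\<lambda>j. 2 * m + 1 - j" and j = "\<lambda>r. 2 * m + 1 - r"]) auto
  also have "\<dots> = (\<Sum>j\<le>m. j)"
    by (simp add: atMost_atLeast0 sum.atLeast_Suc_atMost)
  finally have upper: "(\<Sum>r\<in>{m<..2 * m}. min r (2 * m + 1 - r)) = (\<Sum>j\<le>m. j)" .
  have lower: "(\<Sum>r\<le>m. min r (2 * m + 1 - r)) = (\<Sum>j\<le>m. j)"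
    by (rule sum.cong) auto
  have "(\<Sum>r<2 * m + 1. min r (2 * m + 1 - r))
      = (\<Sum>r\<le>m. min r (2 * m + 1 - r)) + (\<Sum>r\<in>{m<..2 * m}. min r (2 * m + 1 - r))"
    unfolding split by (rule sum.union_disjoint) auto
  also have "\<dots> = 2 * (\<Sum>j\<le>m. j)" unfolding upper lower by simp
  also have "\<dots> = m * (m + 1)"
    using double_gauss_sum[of m, where 'a = nat] by (simp add: atMost_atLeast0)
  finally show ?thesis .
qed

lemma pronic_mod_4:
  fixes m :: nat
  assumes "m mod 4 = 1 \<or> m mod 4 = 2"
  shows "m * (m + 1) mod 4 = 2"
proof -
  have "m * (m + 1) mod 4 = (m mod 4) * ((m + 1) mod 4) mod 4" by (rule mod_mult_eq[symmetric])
  moreover have "m mod 4 = 1 \<and> (m + 1) mod 4 = 2 \<or> m mod 4 = 2 \<and> (m + 1) mod 4 = 3"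
    using assms by presburger
  ultimately show ?thesis by auto
qed

lemma odd_mult_not_4_dvd:
  fixes n x :: nat
  assumes "odd n" "x mod 4 = 2"
  shows "\<not> 4 dvd n * x"
proof -
  have "n mod 4 = 1 \<or> n mod 4 = 3" using assms(1) by presburger
  moreover have "n * x mod 4 = (n mod 4) * (x mod 4) mod 4" by (simp add: mod_mult_eq)
  ultimately have "n * x mod 4 = 2" using assms(2) by auto
  then show ?thesis by (simp add: dvd_eq_mod_eq_0)
qed

lemma dvd_if_of_nat_div_in_Ints:
  fixes n d :: nat
  assumes "real n / real d \<in> \<int>" and "0 < d"
  shows "d dvd n"
proof -
  obtain z where "real n / real d = of_int z" using assms(1) by (elim Ints_cases)
  then have "real_of_int (int n) = real_of_int (int d * z)" using assms(2) by (simp add: field_simps)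
  then have "int n = int d * z" by (simp only: of_int_eq_iff)
  then show ?thesis by (metis dvd_triv_left int_dvd_int_iff)
qed

section \<open>The cycle with a pendant path\<close>

lemma cp_edge_iff:
  assumes "3 \<le> l"
  shows "cp_edge l t x y \<longleftrightarrow>
    (x < l \<and> y < l \<and> (y = x + 1 \<or> x = y + 1 \<or> (x = 0 \<and> y = l - 1) \<or> (y = 0 \<and> x = l - 1)))
    \<or> (0 < t \<and> (x = 0 \<and> y = l \<or> y = 0 \<and> x = l))
    \<or> (l \<le> x \<and> l \<le> y \<and> (y = x + 1 \<or> x = y + 1) \<and> max x y < l + t)"
proof -
  have succ_mod: "x < l \<and> y = (x + 1) mod l \<longleftrightarrow> x < l \<and> (x + 1 < l \<and> y = x + 1 \<or> x = l - 1 \<and> y = 0)"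
    for x y by (cases "x + 1 = l") auto
  show ?thesis unfolding cp_edge_def cp_arc_def succ_mod using assms by auto
qed

definition cp_reflect :: "nat \<Rightarrow> nat \<Rightarrow> nat" where
  "cp_reflect l x = (if 0 < x \<and> x < l then l - x else x)"

lemma cp_reflect_cp_reflect [simp]: "cp_reflect l (cp_reflect l x) = x"
  unfolding cp_reflect_def by auto

lemma cp_reflect_in_graph_aut:
  assumes "3 \<le> l"
  shows "cp_reflect l \<in> graph_aut (cp_vertices l t) (cp_edge l t)"
proof -
  have edge: "cp_edge l t (cp_reflect l u) (cp_reflect l v)" if "cp_edge l t u v" for u v
    using that assms unfolding cp_edge_iff[OF assms] cp_reflect_def by auto
  have "bij_betw (cp_reflect l) (cp_vertices l t) (cp_vertices l t)"
    by (rule bij_betw_byWitness[where f' = "cp_reflect l"])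
      (auto simp: cp_vertices_def cp_reflect_def)
  moreover have "cp_edge l t u v \<longleftrightarrow> cp_edge l t (cp_reflect l u) (cp_reflect l v)" for u v
    using edge[of u v] edge[of "cp_reflect l u" "cp_reflect l v"] by auto
  moreover have "cp_reflect l x = x" if "x \<notin> cp_vertices l t" for x
    using that by (simp add: cp_vertices_def cp_reflect_def)
  ultimately show ?thesis unfolding graph_aut_def by blast
qed

lemma cp_leaf_neighbour:
  assumes "3 \<le> l" "0 < t"
  shows "cp_edge l t (l + t - 1) w \<longleftrightarrow> w = (if t = 1 then 0 else l + t - 2)"
  using assms unfolding cp_edge_iff[OF assms(1)] by auto

lemma cp_two_neighbours:
  assumes "3 \<le> l" "u + 1 < l + t"
  shows "\<exists>w w'. w < l + t \<and> w' < l + t \<and> w \<noteq> w' \<and> cp_edge l t u w \<and> cp_edge l t u w'"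
proof (cases "u < l")
  case True
  show ?thesis
    by (rule exI[of _ "if u + 1 < l then u + 1 else 0"], rule exI[of _ "if u = 0 then l - 1 else u - 1"])
      (use assms True in \<open>auto simp: cp_edge_iff\<close>)
next
  case False
  show ?thesis
    by (rule exI[of _ "u + 1"], rule exI[of _ "if u = l then 0 else u - 1"])
      (use assms False in \<open>auto simp: cp_edge_iff\<close>)
qed

lemma cp_graph_aut_fixes_pendant:
  assumes l: "3 \<le> l" and t: "0 < t" and f: "f \<in> graph_aut (cp_vertices l t) (cp_edge l t)"
  shows "f 0 = 0" and "l \<le> x \<Longrightarrow> f x = x"
proof -
  define p where "p i = (if i < t then l + t - 1 - i else 0)" for i
  have leaf: "f (p 0) = p 0"
  proof (rule graph_aut_fixes_unique_leaf[OF f])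
    show "p 0 \<in> cp_vertices l t" using t by (simp add: p_def cp_vertices_def)
    show "w = w'" if "cp_edge l t (p 0) w" "cp_edge l t (p 0) w'" for w w'
      using that cp_leaf_neighbour[OF l t] t by (simp add: p_def)
    show "\<exists>w w'. w \<in> cp_vertices l t \<and> w' \<in> cp_vertices l t \<and> w \<noteq> w'
        \<and> cp_edge l t u w \<and> cp_edge l t u w'"
      if "u \<in> cp_vertices l t" "u \<noteq> p 0" for u
      using that cp_two_neighbours[OF l, of u t] t by (simp add: p_def cp_vertices_def)
  qed
  have next_to_leaf: "f (p 1) = p 1"
  proof -
    have "cp_edge l t (p 0) (p 1)"
      using cp_leaf_neighbour[OF l t] t by (simp add: p_def numeral_2_eq_2)
    then have "cp_edge l t (p 0) (f (p 1))"
      using graph_autD(4)[OF f, of "p 0" "p 1"] leaf t by (simp add: p_def cp_vertices_def)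
    then show ?thesis using cp_leaf_neighbour[OF l t] t by (simp add: p_def numeral_2_eq_2)
  qed
  have path: "f (p i) = p i" if "i \<le> t" for i
    by (rule graph_aut_fixes_path[OF f _ _ _ _ leaf next_to_leaf that])
      (use l in \<open>auto simp: p_def cp_vertices_def cp_edge_iff\<close>)
  show "f 0 = 0" using path[of t] by (simp add: p_def)
  show "f x = x" if "l \<le> x"
  proof (cases "x < l + t")
    case True
    then have "l + t - 1 - x \<le> t" "p (l + t - 1 - x) = x" using that by (auto simp: p_def)
    then show ?thesis using path by metis
  next
    case False
    then show ?thesis using graph_autD(5)[OF f] by (simp add: cp_vertices_def)
  qed
qed

lemma cp_graph_aut_fixes_cycle:
  assumes l: "3 \<le> l" and f: "f \<in> graph_aut (cp_vertices l t) (cp_edge l t)"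
    and "f 0 = 0" "f 1 = 1" "x < l"
  shows "f x = x"
proof -
  have "f (id x) = id x"
    by (rule graph_aut_fixes_path[OF f, of "l - 1" id])
      (use assms in \<open>auto simp: cp_vertices_def cp_edge_iff\<close>)
  then show ?thesis by simp
qed

lemma cp_graph_aut_eq_id:
  assumes l: "3 \<le> l" and t: "0 < t" and f: "f \<in> graph_aut (cp_vertices l t) (cp_edge l t)"
    and "f 1 = 1"
  shows "f = id"
proof
  fix x
  show "f x = id x"
  proof (cases "x < l")
    case True
    then show ?thesis
      using cp_graph_aut_fixes_cycle[OF l f cp_graph_aut_fixes_pendant(1)[OF l t f] \<open>f 1 = 1\<close>] by simp
  next
    case False
    then show ?thesis using cp_graph_aut_fixes_pendant(2)[OF l t f] by simp
  qed
qed

lemma cp_graph_aut: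
  assumes l: "3 \<le> l" and t: "0 < t"
  shows "graph_aut (cp_vertices l t) (cp_edge l t) = {id, cp_reflect l}"
proof (intro equalityI subsetI)
  fix f assume f: "f \<in> graph_aut (cp_vertices l t) (cp_edge l t)"
  have V: "0 \<in> cp_vertices l t" "1 \<in> cp_vertices l t" "l \<in> cp_vertices l t"
    using l t by (auto simp: cp_vertices_def)
  have "f 0 = 0" "f l = l" using cp_graph_aut_fixes_pendant[OF l t f] by auto
  moreover have "cp_edge l t 0 1" using l by (simp add: cp_edge_iff)
  ultimately have "cp_edge l t 0 (f 1)" using graph_autD(4)[OF f V(1,2)] by simp
  moreover have "f 1 \<noteq> l"
  proof
    assume "f 1 = l"
    with \<open>f l = l\<close> have "1 = l" using inj_onD[OF graph_autD(2)[OF f] _ V(2,3)] by simp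
    with l show False by simp
  qed
  moreover have "f 1 \<in> cp_vertices l t" using graph_autD(3)[OF f] V(2) by blast
  ultimately have "f 1 = 1 \<or> f 1 = l - 1"
    using l by (auto simp: cp_edge_iff cp_vertices_def)
  then show "f \<in> {id, cp_reflect l}"
  proof
    assume "f 1 = 1"
    then show ?thesis using cp_graph_aut_eq_id[OF l t f] by simp
  next
    assume "f 1 = l - 1"
    then have "(cp_reflect l \<circ> f) 1 = 1" using l by (simp add: cp_reflect_def)
    then have "cp_reflect l \<circ> f = id"
      by (rule cp_graph_aut_eq_id[OF l t graph_aut_comp[OF cp_reflect_in_graph_aut[OF l] f]])
    have "f = cp_reflect l \<circ> (cp_reflect l \<circ> f)" by (simp add: fun_eq_iff)
    also have "\<dots> = cp_reflect l" using \<open>cp_reflect l \<circ> f = id\<close> by simp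
    finally have "f = cp_reflect l" .
    then show ?thesis by simp
  qed
next
  fix f assume "f \<in> {id, cp_reflect l}"
  moreover have "id \<in> graph_aut (cp_vertices l t) (cp_edge l t)"
    by (simp add: graph_aut_def)
  ultimately show "f \<in> graph_aut (cp_vertices l t) (cp_edge l t)"
    using cp_reflect_in_graph_aut[OF l] by blast
qed

lemma cp_cycle_walks:
  assumes l: "3 \<le> l" and "a < l"
  shows "(a, (a + k) mod l) \<in> adj_rel (cp_vertices l t) (cp_edge l t) ^^ k
    \<and> ((a + k) mod l, a) \<in> adj_rel (cp_vertices l t) (cp_edge l t) ^^ k"
proof (induction k)
  case 0
  then show ?case using \<open>a < l\<close> by simp
next
  case (Suc k)
  define x where "x = (a + k) mod l"
  have "x < l" using l by (simp add: x_def)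
  have next_x: "(a + Suc k) mod l = (x + 1) mod l" by (simp add: x_def mod_Suc_eq)
  have "(x + 1) mod l < l + t" using mod_less_divisor[of l "x + 1"] l by linarith
  have "(x + 1) mod l \<noteq> x" using \<open>x < l\<close> l by (cases "x + 1 = l") auto
  then have "cp_edge l t x ((x + 1) mod l)" "cp_edge l t ((x + 1) mod l) x"
    using \<open>x < l\<close> by (auto simp: cp_edge_def cp_arc_def)
  then have "(x, (a + Suc k) mod l) \<in> adj_rel (cp_vertices l t) (cp_edge l t)"
    "((a + Suc k) mod l, x) \<in> adj_rel (cp_vertices l t) (cp_edge l t)"
    using \<open>x < l\<close> \<open>(x + 1) mod l < l + t\<close> unfolding next_x by (auto simp: adj_rel_def cp_vertices_def)
  then show ?case using Suc.IH unfolding x_def by (meson relpow_Suc_I relpow_Suc_I2)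
qed

lemma cp_gdist_cycle:
  assumes l: "3 \<le> l" and "a < l" "b < l"
  shows "int (gdist (cp_vertices l t) (cp_edge l t) a b) = min \<bar>int a - int b\<bar> (int l - \<bar>int a - int b\<bar>)"
proof -
  let ?d = "gdist (cp_vertices l t) (cp_edge l t) a b"
  have forward: "(a, b) \<in> adj_rel (cp_vertices l t) (cp_edge l t) ^^ ((b + l - a) mod l)"
    using cp_cycle_walks[OF l \<open>a < l\<close>, of "(b + l - a) mod l" t] assms
    by (simp add: mod_add_right_eq)
  have backward: "(a, b) \<in> adj_rel (cp_vertices l t) (cp_edge l t) ^^ ((a + l - b) mod l)"
    using cp_cycle_walks[OF l \<open>b < l\<close>, of "(a + l - b) mod l" t] assms
    by (simp add: mod_add_right_eq)
  have upper: "int ?d \<le> min \<bar>int a - int b\<bar> (int l - \<bar>int a - int b\<bar>)"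
    using gdist_le_relpow[OF forward] gdist_le_relpow[OF backward] assms
    by (cases a b rule: linorder_cases) (auto simp: le_mod_geq)
  \<comment> \<open>distance to b around the cycle, continued down the pendant path; it is 1-Lipschitz\<close>
  define h where "h v = (if v < l then min \<bar>int v - int b\<bar> (int l - \<bar>int v - int b\<bar>)
      else min (int b) (int l - int b) + (int v - int l + 1))" for v
  have "h x \<le> h y + 1" if "cp_edge l t x y" for x y
    using that assms unfolding cp_edge_iff[OF l] h_def
    by (auto simp: abs_if min_def split: if_splits)
  then have "h a \<le> h b + int ?d" using gdist_lipschitz_bound[OF forward] by blast
  then have "min \<bar>int a - int b\<bar> (int l - \<bar>int a - int b\<bar>) \<le> int ?d"
    using assms by (simp add: h_def)
  with upper show ?thesis by linarith
qed

lemma cp_gdist_reflect: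
  assumes l: "3 \<le> l" and "u < l"
  shows "gdist (cp_vertices l t) (cp_edge l t) u (cp_reflect l u) = min (2 * u mod l) (l - 2 * u mod l)"
proof -
  have "cp_reflect l u < l" using assms by (simp add: cp_reflect_def)
  moreover have "2 * u mod l = (if 2 * u < l then 2 * u else 2 * u - l)"
    using assms by (simp add: le_mod_geq)
  ultimately have "int (gdist (cp_vertices l t) (cp_edge l t) u (cp_reflect l u))
      = int (min (2 * u mod l) (l - 2 * u mod l))"
    using cp_gdist_cycle[OF l \<open>u < l\<close>, of "cp_reflect l u" t] assms
    by (auto simp: cp_reflect_def)
  then show ?thesis by (simp only: of_nat_eq_iff)
qed

lemma cp_sum_gdist_reflect:
  assumes l: "3 \<le> l" and m: "l = 2 * m + 1"
  shows "(\<Sum>u\<in>cp_vertices l t. gdist (cp_vertices l t) (cp_edge l t) u (cp_reflect l u)) = m * (m + 1)"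
proof -
  let ?D = "\<lambda>u. gdist (cp_vertices l t) (cp_edge l t) u (cp_reflect l u)"
  have split: "sum g (cp_vertices l t) = sum g {..<l} + sum g {l..<l + t}" for g :: "nat \<Rightarrow> nat"
    by (simp add: cp_vertices_def lessThan_atLeast0 sum.atLeastLessThan_concat)
  have "sum ?D (cp_vertices l t) = sum ?D {..<l} + sum ?D {l..<l + t}" by (rule split)
  also have "sum ?D {l..<l + t} = 0" by (simp add: cp_reflect_def)
  also have "sum ?D {..<l} = (\<Sum>u<l. min (2 * u mod l) (l - 2 * u mod l))"
    using cp_gdist_reflect[OF l] by simp
  also have "\<dots> = (\<Sum>r<l. min r (l - r))"
    by (rule sum.reindex_bij_betw[OF bij_betw_double_mod, where g = "\<lambda>r. min r (l - r)"]) (simp add: m)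
  also have "\<dots> = m * (m + 1)" using sum_min_complement_odd by (simp add: m)
  finally show ?thesis by simp
qed

lemma card_cp_vertices: "card (cp_vertices l t) = l + t"
  by (simp add: cp_vertices_def)

lemma GP_cp:
  assumes l: "3 \<le> l" "l = 2 * m + 1" and t: "0 < t"
  shows "GP (cp_vertices l t) (cp_edge l t) = real (l + t) * real (m * (m + 1)) / 4"
proof -
  have "cp_reflect l \<noteq> id"
  proof
    assume "cp_reflect l = id"
    then have "cp_reflect l 1 = 1" by simp
    with l show False by (simp add: cp_reflect_def)
  qed
  then have "GP (cp_vertices l t) (cp_edge l t) = real (card (cp_vertices l t)) / 4
      * (\<Sum>u\<in>cp_vertices l t. real (gdist (cp_vertices l t) (cp_edge l t) u (cp_reflect l u)))"
    by (rule GP_eq_if_graph_aut_involution[OF cp_graph_aut[OF l(1) t]])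
  also have "(\<Sum>u\<in>cp_vertices l t. real (gdist (cp_vertices l t) (cp_edge l t) u (cp_reflect l u)))
      = real (m * (m + 1))"
    unfolding of_nat_sum[symmetric] cp_sum_gdist_reflect[OF l] ..
  finally show ?thesis unfolding card_cp_vertices by simp
qed

theorem theorem4p1:
  fixes l t :: nat
  assumes "odd l" and "l mod 8 = 3 \<or> l mod 8 = 5"
    and "t > 0" and "even t"
  shows "card (cp_vertices l t) = l + t
         \<and> GP (cp_vertices l t) (cp_edge l t) \<notin> \<int>"
proof
  show "card (cp_vertices l t) = l + t" by (rule card_cp_vertices)
  define m where "m = l div 2"
  have l: "3 \<le> l" "l = 2 * m + 1" and m: "m mod 4 = 1 \<or> m mod 4 = 2"
    using assms(1,2) unfolding m_def by presburger+
  have "odd (l + t)" using assms(1,4) by simp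
  then have "\<not> 4 dvd (l + t) * (m * (m + 1))"
    using odd_mult_not_4_dvd pronic_mod_4[OF m] by blast
  moreover have "GP (cp_vertices l t) (cp_edge l t) = real ((l + t) * (m * (m + 1))) / real 4"
    using GP_cp[OF l \<open>t > 0\<close>] by simp
  ultimately show "GP (cp_vertices l t) (cp_edge l t) \<notin> \<int>"
    by (metis dvd_if_of_nat_div_in_Ints zero_less_numeral)
qed

end
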